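(* Let $G$ be a finite vertex-transitive bipartite graph. Then $G$ is IS-imprimitive if and only if $G$ is disconnected.
   Context: Graphs are finite and simple; $\alpha(G)$ is the independence number. For $A\subseteq V(G)$, $N_G(A)=\{b: ab\in E(G)\text{ for some }a\in A\}$ and $N_G[A]=N_G(A)\cup A$. A (nonempty) independent set $A$ of $G$ is imprimitive if $|A|<\alpha(G)$ and $\frac{|A|}{|N_G[A]|}=\frac{\alpha(G)}{|V(G)|}$. $G$ is IS-imprimitive (called "imprimitive" in the paper's statement of this lemma) if it has an imprimitive independent set. *)

theory Defs
  imports Complex_Main
begin

definition simple_graph :: "'a set \<Rightarrow> ('a \<Rightarrow> 'a \<Rightarrow> bool) \<Rightarrow> bool" where
  "simple_graph V E \<longleftrightarrow> finite V \<and> (\<forall>x y. E x y \<longrightarrow> x \<in> V \<and> y \<in> V)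
     \<and> (\<forall>x y. E x y \<longrightarrow> E y x) \<and> (\<forall>x. \<not> E x x)"

definition indep_set :: "'a set \<Rightarrow> ('a \<Rightarrow> 'a \<Rightarrow> bool) \<Rightarrow> 'a set \<Rightarrow> bool" where
  "indep_set V E A \<longleftrightarrow> A \<subseteq> V \<and> (\<forall>x\<in>A. \<forall>y\<in>A. \<not> E x y)"

definition indep_number :: "'a set \<Rightarrow> ('a \<Rightarrow> 'a \<Rightarrow> bool) \<Rightarrow> nat" where
  "indep_number V E = Max (card ` {A. indep_set V E A})"

definition nbhd :: "('a \<Rightarrow> 'a \<Rightarrow> bool) \<Rightarrow> 'a set \<Rightarrow> 'a set" where
  "nbhd E A = {b. \<exists>a\<in>A. E a b}"

definition closed_nbhd :: "('a \<Rightarrow> 'a \<Rightarrow> bool) \<Rightarrow> 'a set \<Rightarrow> 'a set" where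
  "closed_nbhd E A = nbhd E A \<union> A"

definition imprimitive_set :: "'a set \<Rightarrow> ('a \<Rightarrow> 'a \<Rightarrow> bool) \<Rightarrow> 'a set \<Rightarrow> bool" where
  "imprimitive_set V E A \<longleftrightarrow> indep_set V E A \<and> A \<noteq> {} \<and> card A < indep_number V E
     \<and> real (card A) / real (card (closed_nbhd E A)) = real (indep_number V E) / real (card V)"

definition IS_imprimitive :: "'a set \<Rightarrow> ('a \<Rightarrow> 'a \<Rightarrow> bool) \<Rightarrow> bool" where
  "IS_imprimitive V E \<longleftrightarrow> (\<exists>A. imprimitive_set V E A)"

definition graph_automorphism :: "'a set \<Rightarrow> ('a \<Rightarrow> 'a \<Rightarrow> bool) \<Rightarrow> ('a \<Rightarrow> 'a) \<Rightarrow> bool" where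
  "graph_automorphism V E f \<longleftrightarrow> bij_betw f V V \<and> (\<forall>x\<in>V. \<forall>y\<in>V. E x y \<longleftrightarrow> E (f x) (f y))"

definition vertex_transitive :: "'a set \<Rightarrow> ('a \<Rightarrow> 'a \<Rightarrow> bool) \<Rightarrow> bool" where
  "vertex_transitive V E \<longleftrightarrow> (\<forall>u\<in>V. \<forall>v\<in>V. \<exists>f. graph_automorphism V E f \<and> f u = v)"

definition bipartite :: "'a set \<Rightarrow> ('a \<Rightarrow> 'a \<Rightarrow> bool) \<Rightarrow> bool" where
  "bipartite V E \<longleftrightarrow> (\<exists>X Y. X \<union> Y = V \<and> X \<inter> Y = {} \<and> indep_set V E X \<and> indep_set V E Y)"

definition connected_graph :: "'a set \<Rightarrow> ('a \<Rightarrow> 'a \<Rightarrow> bool) \<Rightarrow> bool" where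
  "connected_graph V E \<longleftrightarrow> (\<forall>u\<in>V. \<forall>v\<in>V. E\<^sup>*\<^sup>* u v)"

end

theory Submission
  imports Defs
begin

text \<open>
  In a \<open>d\<close>-regular graph, double counting the edges between a set \<open>A\<close> and its neighbourhood
  gives \<open>|A| \<le> |N(A)|\<close> when \<open>d > 0\<close>, with equality only if every neighbour of \<open>N(A)\<close> lies in
  \<open>A\<close>, i.e. \<open>N[A]\<close> is a union of components. Vertex-transitive graphs are regular. For a
  bipartite \<open>d\<close>-regular graph with \<open>d > 0\<close> this forces the two sides of the bipartition, and
  of every component, to have equal size, so \<open>\<alpha>(G) = |V|/2\<close>. An imprimitive set then has
  \<open>|N(A)| = |A|\<close> and \<open>|N[A]| < |V|\<close>, so \<open>N[A]\<close> is a proper union of components; conversely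
  one side of a proper component is imprimitive. Edgeless graphs (\<open>d = 0\<close>, \<open>\<alpha>(G) = |V|\<close>) are
  handled directly: any single vertex is imprimitive once there are two vertices.
\<close>

definition adj_closed :: "('a \<Rightarrow> 'a \<Rightarrow> bool) \<Rightarrow> 'a set \<Rightarrow> bool" where
  "adj_closed E S \<longleftrightarrow> (\<forall>x y. x \<in> S \<longrightarrow> E x y \<longrightarrow> y \<in> S)"

lemma adj_closed_rtranclp:
  assumes "adj_closed E S" and "E\<^sup>*\<^sup>* a b" and "a \<in> S"
  shows "b \<in> S"
  using assms(2,3,1) by (induction rule: rtranclp_induct) (auto simp: adj_closed_def)

lemma connected_graph_adj_closed_superset:
  assumes "connected_graph V E" and "adj_closed E S" and "a \<in> S" and "a \<in> V"
  shows "V \<subseteq> S"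
  using assms adj_closed_rtranclp by (fastforce simp: connected_graph_def)

lemma not_connected_graph_obtains_component:
  assumes "simple_graph V E" and "\<not> connected_graph V E"
  obtains C where "adj_closed E C" and "C \<subseteq> V" and "C \<noteq> {}" and "card C < card V"
proof -
  obtain u w where u: "u \<in> V" and w: "w \<in> V" and "\<not> E\<^sup>*\<^sup>* u w"
    using assms(2) by (auto simp: connected_graph_def)
  define C where "C = {z. E\<^sup>*\<^sup>* u z}"
  have closed: "adj_closed E C"
    by (auto simp: adj_closed_def C_def intro: rtranclp.rtrancl_into_rtrancl)
  have "adj_closed E V"
    using assms(1) by (auto simp: adj_closed_def simple_graph_def)
  then have "C \<subseteq> V"
    using u adj_closed_rtranclp by (fastforce simp: C_def)
  moreover have "w \<notin> C"
    using \<open>\<not> E\<^sup>*\<^sup>* u w\<close> by (simp add: C_def)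
  ultimately have "card C < card V"
    using w assms(1) by (intro psubset_card_mono) (auto simp: simple_graph_def)
  moreover have "u \<in> C"
    by (simp add: C_def)
  ultimately show thesis
    using that closed \<open>C \<subseteq> V\<close> by blast
qed

lemma finite_indep_sets:
  assumes "finite V"
  shows "finite {A. indep_set V E A}"
proof (rule finite_subset)
  show "{A. indep_set V E A} \<subseteq> Pow V"
    by (auto simp: indep_set_def)
qed (use assms in simp)

lemma indep_number_ge:
  assumes "finite V" and "indep_set V E A"
  shows "card A \<le> indep_number V E"
proof -
  have "card A \<in> card ` {A. indep_set V E A}"
    using assms(2) by blast
  then show ?thesis
    unfolding indep_number_def by (rule Max_ge[OF finite_imageI[OF finite_indep_sets[OF assms(1)]]])
qed

lemma indep_number_attained:
  assumes "finite V"
  obtains A where "indep_set V E A" and "card A = indep_number V E"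
proof -
  have "indep_set V E {}"
    by (simp add: indep_set_def)
  then have "card ` {A. indep_set V E A} \<noteq> {}"
    by blast
  then have "indep_number V E \<in> card ` {A. indep_set V E A}"
    unfolding indep_number_def by (rule Max_in[OF finite_imageI[OF finite_indep_sets[OF assms]]])
  then show thesis
    using that by (auto simp: image_iff)
qed

lemma indep_number_le_card:
  assumes "finite V"
  shows "indep_number V E \<le> card V"
proof -
  obtain A where "indep_set V E A" and "card A = indep_number V E"
    using assms by (rule indep_number_attained)
  then show ?thesis
    using assms by (metis card_mono indep_set_def)
qed

lemma sum_card_adj_swap:
  assumes "finite S" and "finite T" and "\<And>x y. E x y \<Longrightarrow> E y x"
  shows "(\<Sum>s\<in>S. card ({y. E s y} \<inter> T)) = (\<Sum>t\<in>T. card ({y. E t y} \<inter> S))"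
proof -
  have "(\<lambda>(a, b). (b, a)) ` (SIGMA s:S. {y. E s y} \<inter> T) = (SIGMA t:T. {y. E t y} \<inter> S)"
    using assms(3) by (auto simp: image_def)
  moreover have "inj_on (\<lambda>(a, b). (b, a)) (SIGMA s:S. {y. E s y} \<inter> T)"
    by (auto simp: inj_on_def)
  ultimately have "card (SIGMA s:S. {y. E s y} \<inter> T) = card (SIGMA t:T. {y. E t y} \<inter> S)"
    by (metis card_image)
  then show ?thesis
    using assms(1,2) by (simp add: card_SigmaI)
qed

lemma vertex_transitive_card_adj_eq:
  assumes "simple_graph V E" and "vertex_transitive V E" and "u \<in> V" and "v \<in> V"
  shows "card {y. E u y} = card {y. E v y}"
proof -
  obtain f where "graph_automorphism V E f" and "f u = v"
    using assms(2-4) unfolding vertex_transitive_def by blast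
  then have bij: "bij_betw f V V" and adj: "\<And>x y. x \<in> V \<Longrightarrow> y \<in> V \<Longrightarrow> E x y \<longleftrightarrow> E (f x) (f y)"
    by (auto simp: graph_automorphism_def)
  have nbhd_V: "{y. E x y} = {y \<in> V. E x y}" for x
    using assms(1) by (auto simp: simple_graph_def)
  have "f ` {y \<in> V. E u y} = {y \<in> f ` V. E v y}"
    using adj assms(3) \<open>f u = v\<close> by auto
  also have "\<dots> = {y \<in> V. E v y}"
    using bij by (simp add: bij_betw_def)
  finally have "bij_betw f {y \<in> V. E u y} {y \<in> V. E v y}"
    using bij by (auto simp: bij_betw_def intro: inj_on_subset)
  then show ?thesis
    by (simp add: nbhd_V bij_betw_same_card)
qed

lemma imprimitive_set_card_closed_nbhd_less:
  assumes "simple_graph V E" and "imprimitive_set V E A"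
  shows "card (closed_nbhd E A) < card V"
proof -
  have A: "A \<noteq> {}" "card A < indep_number V E"
    and ratio: "real (card A) / real (card (closed_nbhd E A)) = real (indep_number V E) / real (card V)"
    using assms(2) by (auto simp: imprimitive_set_def)
  have "closed_nbhd E A \<subseteq> V" and "finite V"
    using assms by (auto simp: simple_graph_def imprimitive_set_def indep_set_def closed_nbhd_def nbhd_def)
  then have "card (closed_nbhd E A) \<le> card V" and fin: "finite (closed_nbhd E A)"
    by (auto intro: card_mono finite_subset)
  moreover have "0 < card A"
    using A(1) fin by (auto simp: closed_nbhd_def card_gt_0_iff intro: finite_subset)
  moreover have "card A \<le> card (closed_nbhd E A)"
    using fin by (intro card_mono) (auto simp: closed_nbhd_def)
  ultimately have "0 < card (closed_nbhd E A)" and "0 < card V"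
    by linarith+
  then have "real (card (closed_nbhd E A)) * indep_number V E = real (card A) * card V"
    using ratio by (simp add: field_simps)
  also have "\<dots> < real (card V) * indep_number V E"
    using A(2) \<open>0 < card A\<close> \<open>card A \<le> card (closed_nbhd E A)\<close> \<open>card (closed_nbhd E A) \<le> card V\<close>
    by (simp add: mult.commute)
  finally show ?thesis
    by (simp add: mult_less_cancel_right)
qed

locale regular_graph =
  fixes V :: "'a set" and E :: "'a \<Rightarrow> 'a \<Rightarrow> bool" and d :: nat
  assumes simple: "simple_graph V E"
    and degree: "x \<in> V \<Longrightarrow> card {y. E x y} = d"
begin

lemma finite_V: "finite V"
  using simple by (simp add: simple_graph_def)

lemma adj_in_V: "E x y \<Longrightarrow> x \<in> V \<and> y \<in> V"
  using simple by (simp add: simple_graph_def)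

lemma adj_sym: "E x y \<Longrightarrow> E y x"
  using simple by (simp add: simple_graph_def)

lemma finite_adj: "finite {y. E x y}"
  using finite_V by (rule finite_subset[rotated]) (auto dest: adj_in_V)

lemma nbhd_subset: "nbhd E A \<subseteq> V"
  by (auto simp: nbhd_def dest: adj_in_V)

lemma degree_times_card_eq_sum:
  assumes "A \<subseteq> V"
  shows "d * card A = (\<Sum>t\<in>nbhd E A. card ({y. E t y} \<inter> A))"
proof -
  have fin: "finite A" "finite (nbhd E A)"
    using assms finite_V nbhd_subset by (auto intro: finite_subset)
  have "d * card A = (\<Sum>a\<in>A. card ({y. E a y} \<inter> nbhd E A))"
  proof -
    have "{y. E a y} \<inter> nbhd E A = {y. E a y}" if "a \<in> A" for a
      using that by (auto simp: nbhd_def)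
    then show ?thesis
      using assms degree by (simp add: subset_iff)
  qed
  also have "\<dots> = (\<Sum>t\<in>nbhd E A. card ({y. E t y} \<inter> A))"
    using fin adj_sym by (rule sum_card_adj_swap)
  finally show ?thesis .
qed

lemma card_adj_inter_le: "t \<in> V \<Longrightarrow> card ({y. E t y} \<inter> B) \<le> d"
  using degree finite_adj by (metis card_mono inf_le1)

lemma degree_times_card_le_nbhd:
  assumes "A \<subseteq> V"
  shows "d * card A \<le> d * card (nbhd E A)"
proof -
  have "(\<Sum>t\<in>nbhd E A. card ({y. E t y} \<inter> A)) \<le> (\<Sum>t\<in>nbhd E A. d)"
    using card_adj_inter_le nbhd_subset by (intro sum_mono) blast
  then show ?thesis
    using degree_times_card_eq_sum[OF assms] by (simp add: mult.commute)
qed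

text \<open>If \<open>|A| = |N(A)|\<close> then every vertex of \<open>N(A)\<close> has all its \<open>d\<close> neighbours in \<open>A\<close>.\<close>
lemma closed_nbhd_adj_closed:
  assumes "A \<subseteq> V" and "d * card A = d * card (nbhd E A)"
  shows "adj_closed E (closed_nbhd E A)"
proof -
  have full: "card ({y. E t y} \<inter> A) = d" if "t \<in> nbhd E A" for t
  proof (rule ccontr)
    assume "card ({y. E t y} \<inter> A) \<noteq> d"
    then have "card ({y. E t y} \<inter> A) < d"
      using card_adj_inter_le nbhd_subset that by (meson le_neq_implies_less subsetD)
    then have "(\<Sum>t\<in>nbhd E A. card ({y. E t y} \<inter> A)) < (\<Sum>t\<in>nbhd E A. d)"
      using that card_adj_inter_le nbhd_subset finite_subset[OF nbhd_subset finite_V]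
      by (intro sum_strict_mono_ex1) blast+
    then show False
      using assms degree_times_card_eq_sum by (simp add: mult.commute)
  qed
  have "y \<in> A" if "t \<in> nbhd E A" and "E t y" for t y
  proof -
    have "card {y. E t y} = d"
      using that(1) nbhd_subset degree by blast
    then have "{y. E t y} \<inter> A = {y. E t y}"
      using full[OF that(1)] finite_adj by (intro card_subset_eq) auto
    then show ?thesis
      using that(2) by blast
  qed
  then show ?thesis
    by (auto simp: adj_closed_def closed_nbhd_def nbhd_def)
qed

lemma card_closed_nbhd_indep:
  assumes "indep_set V E A"
  shows "card (closed_nbhd E A) = card (nbhd E A) + card A"
proof -
  have "finite A" "finite (nbhd E A)" "nbhd E A \<inter> A = {}"
    using assms finite_V nbhd_subset by (auto simp: indep_set_def nbhd_def intro: finite_subset)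
  then show ?thesis
    by (simp add: closed_nbhd_def card_Un_disjoint)
qed

lemma bipartite_adj_closed_balanced:
  assumes "0 < d"
    and "X \<union> Y = V" and "X \<inter> Y = {}" and "indep_set V E X" and "indep_set V E Y"
    and "adj_closed E C" and "C \<subseteq> V"
  shows "card (nbhd E (X \<inter> C)) = card (X \<inter> C)" and "card (Y \<inter> C) = card (X \<inter> C)"
proof -
  have nbhd_other_side: "nbhd E (S \<inter> C) \<subseteq> T \<inter> C"
    if "S \<union> T = V" and "indep_set V E S" for S T
    using that assms(6) adj_in_V by (fastforce simp: nbhd_def indep_set_def adj_closed_def)
  have fin: "finite (X \<inter> C)" "finite (Y \<inter> C)"
    using assms(7) finite_V by (auto intro: finite_subset)
  have "card (X \<inter> C) \<le> card (nbhd E (X \<inter> C))"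
    using degree_times_card_le_nbhd[of "X \<inter> C"] assms(1,2) by auto
  moreover have "card (nbhd E (X \<inter> C)) \<le> card (Y \<inter> C)"
    using nbhd_other_side[OF assms(2,4)] fin by (intro card_mono)
  moreover have "card (Y \<inter> C) \<le> card (nbhd E (Y \<inter> C))"
    using degree_times_card_le_nbhd[of "Y \<inter> C"] assms(1,2) by auto
  moreover have "card (nbhd E (Y \<inter> C)) \<le> card (X \<inter> C)"
    using nbhd_other_side[of Y X] assms(2,5) fin by (intro card_mono) (auto simp: Un_commute)
  ultimately show "card (nbhd E (X \<inter> C)) = card (X \<inter> C)" and "card (Y \<inter> C) = card (X \<inter> C)"
    by linarith+
qed

lemma bipartite_card_eq_twice_indep_number:
  assumes "0 < d" and "bipartite V E"
  shows "card V = 2 * indep_number V E"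
proof -
  obtain X Y where XY: "X \<union> Y = V" "X \<inter> Y = {}" "indep_set V E X" "indep_set V E Y"
    using assms(2) by (auto simp: bipartite_def)
  have "adj_closed E V"
    by (auto simp: adj_closed_def dest: adj_in_V)
  then have "card (Y \<inter> V) = card (X \<inter> V)"
    by (rule bipartite_adj_closed_balanced(2)[OF assms(1) XY _ order_refl])
  then have "card Y = card X"
    using XY(1) by (metis Int_absorb2 Un_upper1 Un_upper2)
  moreover have "card V = card X + card Y"
    using XY(1,2) finite_V by (metis card_Un_disjoint finite_Un)
  moreover have "card X \<le> indep_number V E"
    using finite_V XY(3) by (rule indep_number_ge)
  moreover have "2 * indep_number V E \<le> card V"
  proof -
    obtain A where A: "indep_set V E A" "card A = indep_number V E"
      using indep_number_attained finite_V by blast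
    have "card A \<le> card (nbhd E A)"
      using degree_times_card_le_nbhd assms(1) A(1) by (simp add: indep_set_def)
    moreover have "card (closed_nbhd E A) \<le> card V"
      using A(1) nbhd_subset finite_V by (intro card_mono) (auto simp: closed_nbhd_def indep_set_def)
    ultimately show ?thesis
      using card_closed_nbhd_indep[OF A(1)] A(2) by simp
  qed
  ultimately show ?thesis
    by linarith
qed

lemma IS_imprimitive_imp_not_connected_graph:
  assumes "bipartite V E" and "IS_imprimitive V E"
  shows "\<not> connected_graph V E"
proof
  assume connected: "connected_graph V E"
  obtain A where imp: "imprimitive_set V E A"
    using assms(2) by (auto simp: IS_imprimitive_def)
  then have indep: "indep_set V E A" and "A \<noteq> {}" and less: "card A < indep_number V E"
    and ratio: "real (card A) / real (card (closed_nbhd E A)) = real (indep_number V E) / real (card V)"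
    by (auto simp: imprimitive_set_def)
  have "d * card A = d * card (nbhd E A)"
  proof (cases "d = 0")
    case False
    have "0 < card A"
      using \<open>A \<noteq> {}\<close> indep finite_V by (auto simp: indep_set_def card_gt_0_iff intro: finite_subset)
    moreover have "real (card A) / real (card (nbhd E A) + card A) = 1 / 2"
      using ratio less card_closed_nbhd_indep[OF indep]
        bipartite_card_eq_twice_indep_number[OF _ assms(1)] False by simp
    ultimately show ?thesis
      by (simp add: field_simps)
  qed simp
  then have "adj_closed E (closed_nbhd E A)"
    using indep by (intro closed_nbhd_adj_closed) (simp_all add: indep_set_def)
  moreover obtain a where "a \<in> A"
    using \<open>A \<noteq> {}\<close> by blast
  ultimately have "V \<subseteq> closed_nbhd E A"
    using connected indep by (intro connected_graph_adj_closed_superset) (auto simp: closed_nbhd_def indep_set_def)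
  moreover have "closed_nbhd E A \<subseteq> V"
    using nbhd_subset indep by (auto simp: closed_nbhd_def indep_set_def)
  ultimately have "card V \<le> card (closed_nbhd E A)"
    using finite_V by (metis card_mono finite_subset)
  then show False
    using imprimitive_set_card_closed_nbhd_less[OF simple imp] by simp
qed

lemma degree_zero_no_adj:
  assumes "d = 0"
  shows "\<not> E x y"
proof
  assume "E x y"
  then have "{y. E x y} \<noteq> {}" and "card {y. E x y} = 0"
    using adj_in_V degree assms by auto
  then show False
    using finite_adj by simp
qed

lemma not_connected_graph_imp_IS_imprimitive:
  assumes "bipartite V E" and "\<not> connected_graph V E"
  shows "IS_imprimitive V E"
proof -
  obtain C where closed: "adj_closed E C" and "C \<subseteq> V" and "C \<noteq> {}" and "card C < card V"
    using not_connected_graph_obtains_component[OF simple assms(2)] by blast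
  have "0 < card C"
    using \<open>C \<noteq> {}\<close> \<open>C \<subseteq> V\<close> finite_V by (auto simp: card_gt_0_iff intro: finite_subset)
  show ?thesis
  proof (cases "d = 0")
    case True
    obtain u where "u \<in> C"
      using \<open>C \<noteq> {}\<close> by blast
    have "indep_set V E V"
      using degree_zero_no_adj[OF True] by (simp add: indep_set_def)
    then have "card V \<le> indep_number V E"
      using finite_V by (intro indep_number_ge)
    moreover have "indep_number V E \<le> card V"
      using finite_V by (rule indep_number_le_card)
    ultimately have "indep_number V E = card V"
      by linarith
    moreover have "closed_nbhd E {u} = {u}"
      using degree_zero_no_adj[OF True] by (simp add: closed_nbhd_def nbhd_def)
    ultimately have "imprimitive_set V E {u}"
      using \<open>u \<in> C\<close> \<open>C \<subseteq> V\<close> \<open>0 < card C\<close> \<open>card C < card V\<close> degree_zero_no_adj[OF True]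
      by (simp add: imprimitive_set_def indep_set_def subset_iff)
    then show ?thesis
      by (auto simp: IS_imprimitive_def)
  next
    case False
    obtain X Y where XY: "X \<union> Y = V" "X \<inter> Y = {}" "indep_set V E X" "indep_set V E Y"
      using assms(1) by (auto simp: bipartite_def)
    define A where "A = X \<inter> C"
    have balanced: "card (nbhd E A) = card A" "card (Y \<inter> C) = card A"
      using bipartite_adj_closed_balanced[OF _ XY closed \<open>C \<subseteq> V\<close>] False by (simp_all add: A_def)
    have indep: "indep_set V E A"
      using XY(3) by (auto simp: A_def indep_set_def)
    have "C = A \<union> (Y \<inter> C)" and "A \<inter> (Y \<inter> C) = {}"
      using XY(1,2) \<open>C \<subseteq> V\<close> by (auto simp: A_def)
    moreover have "finite C"
      using \<open>C \<subseteq> V\<close> finite_V by (rule finite_subset)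
    ultimately have "card C = card A + card (Y \<inter> C)"
      by (metis card_Un_disjoint finite_Un)
    then have card_C: "card C = 2 * card A"
      using balanced by simp
    have "card V = 2 * indep_number V E"
      using bipartite_card_eq_twice_indep_number assms(1) False by simp
    then have "imprimitive_set V E A"
      using indep card_closed_nbhd_indep[OF indep] balanced card_C \<open>0 < card C\<close> \<open>card C < card V\<close>
      by (auto simp: imprimitive_set_def)
    then show ?thesis
      by (auto simp: IS_imprimitive_def)
  qed
qed

end

theorem lemma3p2:
  fixes V :: "'a set" and E :: "'a \<Rightarrow> 'a \<Rightarrow> bool"
  assumes "simple_graph V E" and "V \<noteq> {}"
    and "vertex_transitive V E" and "bipartite V E"
  shows "IS_imprimitive V E \<longleftrightarrow> \<not> connected_graph V E"
proof -
  obtain v where "v \<in> V"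
    using assms(2) by blast
  interpret regular_graph V E "card {y. E v y}"
    using assms(1) vertex_transitive_card_adj_eq[OF assms(1,3) _ \<open>v \<in> V\<close>]
    by unfold_locales
  show ?thesis
    using IS_imprimitive_imp_not_connected_graph[OF assms(4)]
      not_connected_graph_imp_IS_imprimitive[OF assms(4)] by blast
qed

end
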